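(* Let $\rho_a$ be a Borel probability measure on $\mathbb{R}^n$, $\rho_b$ a Borel probability measure on $\mathbb{R}^m$, and $c:\mathbb{R}^n\times\mathbb{R}^m\to\mathbb{R}$ a continuous cost bounded from below. If the max-min problem $\sup_f\inf_T\mathcal{L}(T,f)$ admits a saddle point $(\bar T,\bar f)$, then $\mathcal{L}(\bar T,\bar f)=C(\rho_a,\rho_b)$.
   Context: The general OT cost is $C(\rho_a,\rho_b)=\inf_{\pi\in\Pi(\rho_a,\rho_b)}\int c(x,y)\,d\pi(x,y)$, where $\Pi(\rho_a,\rho_b)$ is the set of probability measures on $\mathbb{R}^n\times\mathbb{R}^m$ with marginals $\rho_a$ and $\rho_b$. The Lagrangian is, for Borel maps $T:\mathbb{R}^n\to\mathbb{R}^m$ and functions $f\in L^1(\rho_b)$, $$\mathcal{L}(T,f)=\int_{\mathbb{R}^n}\big[c(x,T(x))-f(T(x))\big]\,d\rho_a(x)+\int_{\mathbb{R}^m}f(y)\,d\rho_b(y),$$ with the first integral understood as an extended real number whenever it is well defined (values in $(-\infty,+\infty]$ allowed). A saddle point $(\bar T,\bar f)$ means $\mathcal{L}(\bar T,f)\le\mathcal{L}(\bar T,\bar f)\le\mathcal{L}(T,\bar f)$ for all admissible $T,f$. *)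

theory Defs
  imports "HOL-Probability.Probability"
begin

definition ext_integral :: "'a measure \<Rightarrow> ('a \<Rightarrow> real) \<Rightarrow> ereal" where
  "ext_integral M g =
     enn2ereal (\<integral>\<^sup>+ x. ennreal (g x) \<partial>M) - enn2ereal (\<integral>\<^sup>+ x. ennreal (- g x) \<partial>M)"

definition ext_integral_defined :: "'a measure \<Rightarrow> ('a \<Rightarrow> real) \<Rightarrow> bool" where
  "ext_integral_defined M g \<longleftrightarrow> g \<in> borel_measurable M \<and>
     ((\<integral>\<^sup>+ x. ennreal (g x) \<partial>M) < \<infinity> \<or> (\<integral>\<^sup>+ x. ennreal (- g x) \<partial>M) < \<infinity>)"

definition couplings :: "'a::euclidean_space measure \<Rightarrow> 'b::euclidean_space measure \<Rightarrow> ('a \<times> 'b) measure set" where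
  "couplings \<rho>a \<rho>b = {\<pi>. prob_space \<pi> \<and> sets \<pi> = sets borel \<and>
      distr \<pi> borel fst = \<rho>a \<and> distr \<pi> borel snd = \<rho>b}"

definition OT_cost :: "('a::euclidean_space \<times> 'b::euclidean_space \<Rightarrow> real) \<Rightarrow> 'a measure \<Rightarrow> 'b measure \<Rightarrow> ereal" where
  "OT_cost c \<rho>a \<rho>b = (INF \<pi> \<in> couplings \<rho>a \<rho>b. ext_integral \<pi> c)"

definition lagrangian :: "('a \<times> 'b \<Rightarrow> real) \<Rightarrow> 'a measure \<Rightarrow> 'b measure \<Rightarrow> ('a \<Rightarrow> 'b) \<Rightarrow> ('b \<Rightarrow> real) \<Rightarrow> ereal" where
  "lagrangian c \<rho>a \<rho>b T f =
     ext_integral \<rho>a (\<lambda>x. c (x, T x) - f (T x)) + ereal (\<integral>y. f y \<partial>\<rho>b)"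

definition lagrangian_defined :: "('a \<times> 'b \<Rightarrow> real) \<Rightarrow> 'a measure \<Rightarrow> ('a \<Rightarrow> 'b) \<Rightarrow> ('b \<Rightarrow> real) \<Rightarrow> bool" where
  "lagrangian_defined c \<rho>a T f = ext_integral_defined \<rho>a (\<lambda>x. c (x, T x) - f (T x))"

end

theory Submission
  imports Defs
begin

text \<open>Weak duality gives one inequality: for any coupling \<pi> and any integrable f, the Lagrangian
  at f can be pushed down to the cost of \<pi> by choosing T(x) to be a Borel measurable near-minimiser
  of y \<mapsto> c(x,y) - f(y); this uses continuity of c and a countable dense subset of each level band
  of f. Conversely, maximality of fbar against the perturbations fbar + t \<cdot> indicator B forces Tbar to push
  \<rho>a forward to \<rho>b, so the graph of Tbar is a coupling whose cost equals the saddle value.\<close>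

lemma ext_integral_eq_integral:
  assumes "integrable M f"
  shows "ext_integral M f = ereal (integral\<^sup>L M f)"
proof -
  have "(\<integral>\<^sup>+ x. ennreal (f x) \<partial>M) < \<infinity>" "(\<integral>\<^sup>+ x. ennreal (- f x) \<partial>M) < \<infinity>"
    using integrableD(2,3)[OF assms] by (simp_all add: less_top)
  then show ?thesis
    unfolding ext_integral_def real_lebesgue_integral_def[OF assms]
    by (cases "\<integral>\<^sup>+ x. ennreal (f x) \<partial>M" rule: ennreal_cases;
        cases "\<integral>\<^sup>+ x. ennreal (- f x) \<partial>M" rule: ennreal_cases) (auto simp: enn2ereal_ennreal)
qed

lemma ext_integral_defined_integrable:
  "integrable M f \<Longrightarrow> ext_integral_defined M f"
  unfolding ext_integral_defined_def using integrableD(2)[of M f] by (auto simp: less_top)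

lemma
  assumes T: "T \<in> M \<rightarrow>\<^sub>M N" and f: "f \<in> borel_measurable N"
  shows ext_integral_distr: "ext_integral (distr M N T) f = ext_integral M (\<lambda>x. f (T x))"
    and ext_integral_defined_distr:
      "ext_integral_defined (distr M N T) f \<longleftrightarrow> ext_integral_defined M (\<lambda>x. f (T x))"
proof -
  have pos: "(\<integral>\<^sup>+ x. ennreal (f x) \<partial>distr M N T) = (\<integral>\<^sup>+ x. ennreal (f (T x)) \<partial>M)"
    and neg: "(\<integral>\<^sup>+ x. ennreal (- f x) \<partial>distr M N T) = (\<integral>\<^sup>+ x. ennreal (- f (T x)) \<partial>M)"
    using T f by (auto intro: nn_integral_distr)
  show "ext_integral (distr M N T) f = ext_integral M (\<lambda>x. f (T x))"
    unfolding ext_integral_def pos neg ..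
  have "(\<lambda>x. f (T x)) \<in> borel_measurable M" using T f by measurable
  then show "ext_integral_defined (distr M N T) f \<longleftrightarrow> ext_integral_defined M (\<lambda>x. f (T x))"
    unfolding ext_integral_defined_def pos neg using f by simp
qed

lemma
  assumes f: "f \<in> borel_measurable M" and w: "integrable M w"
    and le: "\<And>x. x \<in> space M \<Longrightarrow> f x \<le> w x"
  shows ext_integral_le_integral: "ext_integral M f \<le> ereal (integral\<^sup>L M w)"
    and ext_integral_defined_le_integrable: "ext_integral_defined M f"
proof -
  have pos: "(\<integral>\<^sup>+ x. ennreal (f x) \<partial>M) \<le> (\<integral>\<^sup>+ x. ennreal (w x) \<partial>M)"
    and neg: "(\<integral>\<^sup>+ x. ennreal (- w x) \<partial>M) \<le> (\<integral>\<^sup>+ x. ennreal (- f x) \<partial>M)"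
    using le by (auto intro!: nn_integral_mono ennreal_leI)
  then show "ext_integral_defined M f"
    using f integrableD(2)[OF w] unfolding ext_integral_defined_def
    by (auto simp: less_top dest: le_less_trans)
  have "ext_integral M f \<le> ext_integral M w"
    unfolding ext_integral_def
    by (rule ereal_minus_mono) (use pos neg in \<open>auto simp: less_eq_ennreal.rep_eq[symmetric]\<close>)
  then show "ext_integral M f \<le> ereal (integral\<^sup>L M w)"
    using ext_integral_eq_integral[OF w] by simp
qed

lemma
  assumes "prob_space M" and f: "f \<in> borel_measurable M"
    and lb: "\<And>x. x \<in> space M \<Longrightarrow> a \<le> f x"
  shows ext_integral_defined_bounded_below: "ext_integral_defined M f"
    and ext_integral_bounded_below_neq_minf: "ext_integral M f \<noteq> -\<infinity>"
proof -
  have "(\<integral>\<^sup>+ x. ennreal (- f x) \<partial>M) \<le> (\<integral>\<^sup>+ x. ennreal (- a) \<partial>M)"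
    using lb by (intro nn_integral_mono) (simp add: ennreal_leI)
  also have "\<dots> = ennreal (- a)" using prob_space.emeasure_space_1[OF assms(1)] by simp
  finally have neg: "(\<integral>\<^sup>+ x. ennreal (- f x) \<partial>M) < \<infinity>" by (simp add: le_less_trans)
  then show "ext_integral_defined M f" unfolding ext_integral_defined_def using f by auto
  show "ext_integral M f \<noteq> -\<infinity>"
    using neg unfolding ext_integral_def
    by (cases "\<integral>\<^sup>+ x. ennreal (- f x) \<partial>M" rule: ennreal_cases)
      (auto simp: enn2ereal_ennreal, cases "enn2ereal (\<integral>\<^sup>+ x. ennreal (f x) \<partial>M)", auto)
qed

lemma integrable_if_ext_integral_finite:
  assumes f: "f \<in> borel_measurable M" and fin: "\<bar>ext_integral M f\<bar> \<noteq> \<infinity>"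
  shows "integrable M f"
proof -
  let ?p = "\<integral>\<^sup>+ x. ennreal (f x) \<partial>M" and ?n = "\<integral>\<^sup>+ x. ennreal (- f x) \<partial>M"
  have "?p \<noteq> \<infinity>" "?n \<noteq> \<infinity>"
    using fin unfolding ext_integral_def
    by (cases ?p rule: ennreal_cases; cases ?n rule: ennreal_cases; simp add: enn2ereal_ennreal)+
  have norm_split: "ennreal (norm (f x)) = ennreal (f x) + ennreal (- f x)" for x
    by (cases "f x \<ge> 0") (auto simp: ennreal_neg)
  have "(\<integral>\<^sup>+ x. ennreal (norm (f x)) \<partial>M) = ?p + ?n"
    unfolding norm_split using f by (intro nn_integral_add) auto
  also have "\<dots> < \<infinity>" using \<open>?p \<noteq> \<infinity>\<close> \<open>?n \<noteq> \<infinity>\<close> by (simp add: less_top)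
  finally show ?thesis using f by (intro integrableI_bounded) auto
qed

lemma countable_dense_within_levels:
  fixes g :: "'b::{metric_space, second_countable_topology} \<Rightarrow> real"
  assumes "\<delta> > 0"
  obtains D where "countable D" "\<And>y e. e > 0 \<Longrightarrow> \<exists>d\<in>D. dist d y < e \<and> \<bar>g d - g y\<bar> < \<delta>"
proof -
  define level where "level q = {y. \<lfloor>g y / \<delta>\<rfloor> = q}" for q :: int
  have "\<exists>D. countable D \<and> D \<subseteq> level q \<and> level q \<subseteq> closure D" for q
    by (rule separable) blast
  then obtain D where D: "\<And>q. countable (D q)" "\<And>q. D q \<subseteq> level q" "\<And>q. level q \<subseteq> closure (D q)"
    by metis
  have "\<exists>d\<in>\<Union>(range D). dist d y < e \<and> \<bar>g d - g y\<bar> < \<delta>" if "e > 0" for y e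
  proof -
    let ?q = "\<lfloor>g y / \<delta>\<rfloor>"
    have "y \<in> closure (D ?q)" using D(3) by (auto simp: level_def)
    then obtain d where d: "d \<in> D ?q" "dist d y < e"
      using \<open>e > 0\<close> by (auto simp: closure_approachable)
    then have "\<lfloor>g d / \<delta>\<rfloor> = \<lfloor>g y / \<delta>\<rfloor>" using D(2) by (auto simp: level_def)
    then have "\<bar>g d / \<delta> - g y / \<delta>\<bar> < 1" by linarith
    then have "\<bar>g d - g y\<bar> < \<delta>" using \<open>\<delta> > 0\<close> by (simp add: diff_divide_distrib[symmetric] abs_divide)
    then show ?thesis using d by blast
  qed
  then show thesis using D(1) by (intro that[of "\<Union>(range D)"]) auto
qed

lemma measurable_approx_argmin:
  fixes u :: "nat \<Rightarrow> 'a \<Rightarrow> real"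
  assumes u: "\<And>n. u n \<in> borel_measurable M" and lb: "\<And>n x. a \<le> u n x" and "\<delta> > 0"
  obtains N where "N \<in> M \<rightarrow>\<^sub>M count_space UNIV" "\<And>x n. u (N x) x < u n x + \<delta>"
proof -
  define \<Psi> where "\<Psi> x = (INF n. ereal (u n x))" for x
  have \<Psi>_le: "\<Psi> x \<le> ereal (u n x)" for x n unfolding \<Psi>_def by (rule INF_lower) simp
  have \<Psi>_ge: "ereal a \<le> \<Psi> x" for x unfolding \<Psi>_def using lb by (intro INF_greatest) simp
  have \<Psi>_fin: "\<bar>\<Psi> x\<bar> \<noteq> \<infinity>" for x using \<Psi>_le[of x 0] \<Psi>_ge[of x] by auto
  define P where "P n x \<longleftrightarrow> ereal (u n x) < \<Psi> x + ereal \<delta>" for n x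
  have "\<exists>n. P n x" for x
  proof -
    define t where "t = \<Psi> x + ereal \<delta>"
    have "\<Psi> x < t" unfolding t_def using \<Psi>_fin[of x] \<open>\<delta> > 0\<close> by (cases "\<Psi> x") auto
    then have "\<exists>n. ereal (u n x) < t" unfolding \<Psi>_def by (simp add: INF_less_iff)
    then show ?thesis unfolding P_def t_def .
  qed
  then have P_Least: "P (LEAST n. P n x) x" for x by (rule LeastI_ex)
  have "\<Psi> \<in> borel_measurable M" unfolding \<Psi>_def using u by measurable
  then have "Measurable.pred M (P n)" for n unfolding P_def using u by measurable
  then have "(\<lambda>x. LEAST n. P n x) \<in> M \<rightarrow>\<^sub>M count_space UNIV" by measurable
  moreover have "u (LEAST n. P n x) x < u n x + \<delta>" for x n
  proof -
    have "ereal (u (LEAST n. P n x) x) < \<Psi> x + ereal \<delta>" using P_Least[of x] unfolding P_def .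
    also have "\<dots> \<le> ereal (u n x) + ereal \<delta>" using \<Psi>_le by (rule add_right_mono)
    finally show ?thesis by simp
  qed
  ultimately show thesis by (rule that)
qed

lemma measurable_approx_minimizer:
  fixes c :: "'a::topological_space \<times> 'b::{metric_space, second_countable_topology} \<Rightarrow> real"
    and g :: "'b \<Rightarrow> real"
  assumes c: "continuous_on UNIV c" and "\<delta> > 0"
  obtains T where "T \<in> borel_measurable borel"
    "\<And>x y. c (x, T x) - g (T x) \<le> max (c (x, y) - g y) K + 3 * \<delta>"
proof -
  obtain D where "countable D" and D: "\<And>y e. e > 0 \<Longrightarrow> \<exists>d\<in>D. dist d y < e \<and> \<bar>g d - g y\<bar> < \<delta>"
    using countable_dense_within_levels \<open>\<delta> > 0\<close> by blast
  have "D \<noteq> {}" using D[of 1 undefined] by auto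
  define d where "d = from_nat_into D"
  have d_onto: "\<exists>n. d n = p" if "p \<in> D" for p
    unfolding d_def using from_nat_into_surj[OF \<open>countable D\<close> that] by metis
  have c_slice: "continuous_on UNIV (\<lambda>x. c (x, y))" "continuous_on UNIV (\<lambda>y. c (x, y))" for x y
    by (auto intro!: continuous_on_compose2[OF c] continuous_intros)
  define u where "u n x = max (c (x, d n) - g (d n)) K" for n x
  have "u n \<in> borel_measurable borel" for n
    unfolding u_def using borel_measurable_continuous_onI[OF c_slice(1)] by measurable
  then obtain N where N: "N \<in> borel \<rightarrow>\<^sub>M count_space UNIV" "\<And>x n. u (N x) x < u n x + \<delta>"
    using measurable_approx_argmin[of u borel K \<delta>] \<open>\<delta> > 0\<close> unfolding u_def by auto
  have "(\<lambda>x. d (N x)) \<in> borel_measurable borel"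
    using N(1) by (rule measurable_compose) simp
  moreover have "c (x, d (N x)) - g (d (N x)) \<le> max (c (x, y) - g y) K + 3 * \<delta>" for x y
  proof -
    obtain e where "e > 0" and e: "\<And>y'. dist y' y < e \<Longrightarrow> dist (c (x, y')) (c (x, y)) < \<delta>"
      using c_slice(2)[of x] \<open>\<delta> > 0\<close> unfolding continuous_on_iff by blast
    then obtain p where p: "p \<in> D" "dist p y < e" "\<bar>g p - g y\<bar> < \<delta>" using D by blast
    obtain n where "d n = p" using d_onto p(1) by blast
    have "c (x, p) < c (x, y) + \<delta>" using e[OF p(2)] by (simp add: dist_real_def)
    then have "c (x, d n) - g (d n) < c (x, y) - g y + 2 * \<delta>"
      using p(3) unfolding \<open>d n = p\<close> by linarith
    then have "u n x < max (c (x, y) - g y) K + 2 * \<delta>"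
      using \<open>\<delta> > 0\<close> max.cobounded1[of "c (x, y) - g y" K] max.cobounded2[of "c (x, y) - g y" K]
      unfolding u_def by (simp add: max_less_iff_conj) linarith
    then show ?thesis
      using N(2)[of x n] max.cobounded1[of "c (x, d (N x)) - g (d (N x))" K] unfolding u_def by linarith
  qed
  ultimately show thesis by (rule that)
qed

lemma tendsto_integral_max_neg_nat:
  fixes H :: "'a \<Rightarrow> real"
  assumes "finite_measure M" and H: "integrable M H"
  shows "(\<lambda>k. \<integral>z. max (H z) (- real k) \<partial>M) \<longlonglongrightarrow> integral\<^sup>L M H"
proof (rule integral_dominated_convergence[where w = "\<lambda>z. norm (H z)"])
  show "AE z in M. (\<lambda>k. max (H z) (- real k)) \<longlonglongrightarrow> H z"
  proof (rule AE_I2)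
    fix z
    have "\<forall>\<^sub>F k in sequentially. max (H z) (- real k) = H z"
      by (rule eventually_sequentiallyI[of "nat \<lceil>- H z\<rceil>"]) linarith
    then show "(\<lambda>k. max (H z) (- real k)) \<longlonglongrightarrow> H z" by (rule tendsto_eventually)
  qed
qed (use H in auto)

lemma measurable_coupling_iff:
  "\<pi> \<in> couplings \<rho>a \<rho>b \<Longrightarrow> X \<in> \<pi> \<rightarrow>\<^sub>M N \<longleftrightarrow> X \<in> borel \<rightarrow>\<^sub>M N"
  unfolding couplings_def using measurable_cong_sets[OF _ refl] by blast

lemma
  fixes c :: "'a::euclidean_space \<times> 'b::euclidean_space \<Rightarrow> real"
  assumes \<pi>: "\<pi> \<in> couplings \<rho>a \<rho>b" and c: "c \<in> borel_measurable borel"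
    and f: "f \<in> borel_measurable borel" and T: "T \<in> borel_measurable borel"
    and w: "integrable \<pi> w" and le: "\<And>x y. c (x, T x) - f (T x) \<le> w (x, y)"
  shows lagrangian_defined_if_coupling_bound: "lagrangian_defined c \<rho>a T f"
    and lagrangian_le_coupling_bound:
      "lagrangian c \<rho>a \<rho>b T f \<le> ereal (integral\<^sup>L \<pi> w + integral\<^sup>L \<rho>b f)"
proof -
  define u where "u x = c (x, T x) - f (T x)" for x
  have fst: "fst \<in> \<pi> \<rightarrow>\<^sub>M borel"
    unfolding measurable_coupling_iff[OF \<pi>] borel_prod[symmetric] by simp
  have "u \<in> borel_measurable borel" unfolding u_def using c f T by measurable
  then have u_fst: "ext_integral \<rho>a u = ext_integral \<pi> (\<lambda>z. u (fst z))"
      "ext_integral_defined \<rho>a u \<longleftrightarrow> ext_integral_defined \<pi> (\<lambda>z. u (fst z))"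
      "(\<lambda>z. u (fst z)) \<in> borel_measurable \<pi>"
    using \<pi> ext_integral_distr[OF fst] ext_integral_defined_distr[OF fst] fst
    unfolding couplings_def by auto
  moreover have "u (fst z) \<le> w z" for z using le[of "fst z" "snd z"] unfolding u_def by simp
  ultimately have u_le: "ext_integral \<rho>a u \<le> ereal (integral\<^sup>L \<pi> w)"
    and "ext_integral_defined \<rho>a u"
    using ext_integral_le_integral[OF _ w] ext_integral_defined_le_integrable[OF _ w] by auto
  then show "lagrangian_defined c \<rho>a T f" unfolding lagrangian_defined_def u_def by simp
  from add_right_mono[OF u_le, of "ereal (integral\<^sup>L \<rho>b f)"]
  show "lagrangian c \<rho>a \<rho>b T f \<le> ereal (integral\<^sup>L \<pi> w + integral\<^sup>L \<rho>b f)"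
    unfolding lagrangian_def u_def by simp
qed

lemma integrable_coupling_if_bounded_below:
  assumes \<pi>: "\<pi> \<in> couplings \<rho>a \<rho>b" and c: "c \<in> borel_measurable borel"
    and c_lb: "\<And>z. a \<le> c z" and fin: "ext_integral \<pi> c \<noteq> \<infinity>"
  shows "integrable \<pi> c"
proof -
  have "prob_space \<pi>" using \<pi> unfolding couplings_def by simp
  moreover have c_\<pi>: "c \<in> borel_measurable \<pi>" using c unfolding measurable_coupling_iff[OF \<pi>] .
  ultimately have "ext_integral \<pi> c \<noteq> -\<infinity>" using c_lb by (rule ext_integral_bounded_below_neq_minf)
  with fin show ?thesis using c_\<pi> by (intro integrable_if_ext_integral_finite) auto
qed

lemma
  fixes f :: "'b::euclidean_space \<Rightarrow> real"
  assumes \<pi>: "\<pi> \<in> couplings \<rho>a \<rho>b" and f: "integrable \<rho>b f"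
  shows integrable_coupling_snd: "integrable \<pi> (\<lambda>z. f (snd z))"
    and integral_coupling_snd: "(\<integral>z. f (snd z) \<partial>\<pi>) = integral\<^sup>L \<rho>b f"
proof -
  have snd_\<pi>: "distr \<pi> borel snd = \<rho>b" using \<pi> unfolding couplings_def by simp
  have snd: "snd \<in> \<pi> \<rightarrow>\<^sub>M borel"
    unfolding measurable_coupling_iff[OF \<pi>] borel_prod[symmetric] by simp
  have f_meas: "f \<in> borel_measurable borel" using f unfolding snd_\<pi>[symmetric] by auto
  show "integrable \<pi> (\<lambda>z. f (snd z))" and "(\<integral>z. f (snd z) \<partial>\<pi>) = integral\<^sup>L \<rho>b f"
    using f unfolding snd_\<pi>[symmetric]
    by (simp_all add: integrable_distr_eq[OF snd f_meas] integral_distr[OF snd f_meas])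
qed

lemma INF_lagrangian_le_coupling_cost:
  fixes c :: "'a::euclidean_space \<times> 'b::euclidean_space \<Rightarrow> real"
  assumes c: "continuous_on UNIV c" and c_lb: "\<And>z. a \<le> c z"
    and f: "integrable \<rho>b f" and \<pi>: "\<pi> \<in> couplings \<rho>a \<rho>b"
  shows "(INF T \<in> {T \<in> borel_measurable borel. lagrangian_defined c \<rho>a T f}.
            lagrangian c \<rho>a \<rho>b T f) \<le> ext_integral \<pi> c"
    (is "?inf \<le> _")
proof (cases "ext_integral \<pi> c = \<infinity>")
  case False
  interpret \<pi>: prob_space \<pi> using \<pi> unfolding couplings_def by simp
  have c_meas: "c \<in> borel_measurable borel" using c by (rule borel_measurable_continuous_onI)
  have "sets \<rho>b = sets borel" using \<pi> unfolding couplings_def by auto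
  then have f_meas: "f \<in> borel_measurable borel"
    using borel_measurable_integrable[OF f] measurable_cong_sets by blast
  have c_int: "integrable \<pi> c" using \<pi> c_meas c_lb False by (rule integrable_coupling_if_bounded_below)
  have H: "integrable \<pi> (\<lambda>z. c z - f (snd z))" using c_int integrable_coupling_snd[OF \<pi> f] by auto
  show ?thesis
  proof (rule ereal_le_epsilon2)
    fix e :: real assume "0 < e"
    define \<delta> where "\<delta> = e / 4"
    have "\<delta> > 0" using \<open>0 < e\<close> unfolding \<delta>_def by simp
    txt \<open>Truncating from below keeps the pointwise infimum over y finite, so that an approximate
      minimiser T exists.\<close>
    define s where "s k z = max (c z - f (snd z)) (- real k)" for k :: nat and z
    have s_int: "integrable \<pi> (s k)" for k
      unfolding s_def using H by (intro integrable_max) auto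
    then have w_int: "integrable \<pi> (\<lambda>z. s k z + 3 * \<delta>)" for k
      by (intro Bochner_Integration.integrable_add \<pi>.integrable_const)
    obtain k where "dist (\<integral>z. s k z \<partial>\<pi>) (\<integral>z. c z - f (snd z) \<partial>\<pi>) < \<delta>"
      using tendstoD[OF tendsto_integral_max_neg_nat[OF \<pi>.finite_measure_axioms H] \<open>\<delta> > 0\<close>]
      unfolding s_def eventually_sequentially by blast
    then have k: "(\<integral>z. s k z \<partial>\<pi>) < (\<integral>z. c z - f (snd z) \<partial>\<pi>) + \<delta>"
      by (simp add: dist_real_def)
    obtain T where T: "T \<in> borel_measurable borel"
      and T_le: "\<And>x y. c (x, T x) - f (T x) \<le> s k (x, y) + 3 * \<delta>"
      using measurable_approx_minimizer[OF c \<open>\<delta> > 0\<close>, of f "- real k"] unfolding s_def by auto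
    note bound = \<pi> c_meas f_meas T w_int T_le
    have "?inf \<le> lagrangian c \<rho>a \<rho>b T f"
      using T lagrangian_defined_if_coupling_bound[OF bound] by (intro INF_lower) simp
    also have "\<dots> \<le> ereal ((\<integral>z. s k z + 3 * \<delta> \<partial>\<pi>) + integral\<^sup>L \<rho>b f)"
      by (rule lagrangian_le_coupling_bound[OF bound])
    also have "\<dots> \<le> ereal (integral\<^sup>L \<pi> c + e)"
      using k H c_int integrable_coupling_snd[OF \<pi> f] integral_coupling_snd[OF \<pi> f]
        Bochner_Integration.integral_add[OF s_int \<pi>.integrable_const]
      unfolding \<delta>_def by (simp add: \<pi>.prob_space)
    also have "\<dots> = ext_integral \<pi> c + ereal e"
      using ext_integral_eq_integral[OF c_int] by simp
    finally show "?inf \<le> ext_integral \<pi> c + ereal e" .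
  qed
qed simp

lemma
  assumes g: "integrable \<rho>a (\<lambda>x. c (x, T x) - f (T x))" and f: "integrable \<rho>b f"
    and h: "integrable \<rho>b h" and hT: "integrable \<rho>a (\<lambda>x. h (T x))"
  shows lagrangian_defined_add: "lagrangian_defined c \<rho>a T (\<lambda>y. f y + h y)"
    and lagrangian_add: "lagrangian c \<rho>a \<rho>b T (\<lambda>y. f y + h y) =
      lagrangian c \<rho>a \<rho>b T f + ereal (integral\<^sup>L \<rho>b h - (\<integral>x. h (T x) \<partial>\<rho>a))"
proof -
  have eq: "(\<lambda>x. c (x, T x) - (f (T x) + h (T x))) = (\<lambda>x. (c (x, T x) - f (T x)) - h (T x))"
    by auto
  have int: "integrable \<rho>a (\<lambda>x. c (x, T x) - (f (T x) + h (T x)))"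
    unfolding eq using g hT by auto
  then show "lagrangian_defined c \<rho>a T (\<lambda>y. f y + h y)"
    unfolding lagrangian_defined_def by (rule ext_integral_defined_integrable)
  show "lagrangian c \<rho>a \<rho>b T (\<lambda>y. f y + h y) =
      lagrangian c \<rho>a \<rho>b T f + ereal (integral\<^sup>L \<rho>b h - (\<integral>x. h (T x) \<partial>\<rho>a))"
    unfolding lagrangian_def ext_integral_eq_integral[OF int] ext_integral_eq_integral[OF g]
    using g f h hT by (simp add: eq)
qed

lemma distr_eq_if_lagrangian_maximizer:
  assumes "prob_space \<rho>a" "prob_space \<rho>b" and T: "T \<in> \<rho>a \<rightarrow>\<^sub>M \<rho>b" and f: "integrable \<rho>b f"
    and g: "integrable \<rho>a (\<lambda>x. c (x, T x) - f (T x))"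
    and max: "\<And>f'. integrable \<rho>b f' \<Longrightarrow> lagrangian_defined c \<rho>a T f' \<Longrightarrow>
      lagrangian c \<rho>a \<rho>b T f' \<le> lagrangian c \<rho>a \<rho>b T f"
  shows "distr \<rho>a \<rho>b T = \<rho>b"
proof (rule measure_eqI)
  interpret a: prob_space \<rho>a by fact
  interpret b: prob_space \<rho>b by fact
  interpret D: prob_space "distr \<rho>a \<rho>b T" using T by (rule a.prob_space_distr)
  show "sets (distr \<rho>a \<rho>b T) = sets \<rho>b" by simp
  fix B assume "B \<in> sets (distr \<rho>a \<rho>b T)"
  then have B: "B \<in> sets \<rho>b" by simp
  have "t * (measure \<rho>b B - measure (distr \<rho>a \<rho>b T) B) \<le> 0" for t :: real
  proof -
    define h where "h y = t * indicator B y" for y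
    have h_meas: "h \<in> borel_measurable \<rho>b" unfolding h_def using B by measurable
    have "integrable (distr \<rho>a \<rho>b T) h" and "integrable \<rho>b h"
      unfolding h_def using B
      by (auto simp: less_top[symmetric] D.emeasure_finite b.emeasure_finite)
    then have hT: "integrable \<rho>a (\<lambda>x. h (T x))"
      using integrable_distr_eq[OF T h_meas] by simp
    have "(\<integral>x. h (T x) \<partial>\<rho>a) = integral\<^sup>L (distr \<rho>a \<rho>b T) h"
      using T h_meas by (rule integral_distr[symmetric])
    also have "\<dots> = t * measure (distr \<rho>a \<rho>b T) B" unfolding h_def using B by simp
    finally have "(\<integral>x. h (T x) \<partial>\<rho>a) = t * measure (distr \<rho>a \<rho>b T) B" .
    moreover have "integral\<^sup>L \<rho>b h = t * measure \<rho>b B" unfolding h_def using B by simp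
    moreover have "lagrangian c \<rho>a \<rho>b T (\<lambda>y. f y + h y) \<le> lagrangian c \<rho>a \<rho>b T f"
      using max lagrangian_defined_add[OF g f \<open>integrable \<rho>b h\<close> hT] f \<open>integrable \<rho>b h\<close> by auto
    moreover have "lagrangian c \<rho>a \<rho>b T f = ereal ((\<integral>x. c (x, T x) - f (T x) \<partial>\<rho>a) + integral\<^sup>L \<rho>b f)"
      unfolding lagrangian_def ext_integral_eq_integral[OF g] by simp
    ultimately show ?thesis
      unfolding lagrangian_add[OF g f \<open>integrable \<rho>b h\<close> hT] by (simp add: algebra_simps)
  qed
  from this[of 1] this[of "-1"] have "measure \<rho>b B = measure (distr \<rho>a \<rho>b T) B" by simp
  then show "emeasure (distr \<rho>a \<rho>b T) B = emeasure \<rho>b B"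
    by (simp add: D.emeasure_eq_measure b.emeasure_eq_measure)
qed

lemma distr_graph_in_couplings:
  fixes \<rho>a :: "'a::euclidean_space measure" and T :: "'a \<Rightarrow> 'b::euclidean_space"
  assumes "prob_space \<rho>a" and sets_a: "sets \<rho>a = sets borel"
    and T: "T \<in> borel_measurable borel" and push: "distr \<rho>a borel T = \<rho>b"
  shows "distr \<rho>a borel (\<lambda>x. (x, T x)) \<in> couplings \<rho>a \<rho>b"
proof -
  have graph: "(\<lambda>x. (x, T x)) \<in> \<rho>a \<rightarrow>\<^sub>M borel"
    using T unfolding measurable_cong_sets[OF sets_a refl] borel_prod[symmetric] by simp
  have marginal: "distr (distr \<rho>a borel (\<lambda>x. (x, T x))) borel p = distr \<rho>a borel (p \<circ> (\<lambda>x. (x, T x)))"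
    if "p \<in> borel \<rightarrow>\<^sub>M (borel :: 'c::topological_space measure)" for p
    using that graph by (rule distr_distr)
  have "(fst :: 'a \<times> 'b \<Rightarrow> 'a) \<in> borel \<rightarrow>\<^sub>M borel" "(snd :: 'a \<times> 'b \<Rightarrow> 'b) \<in> borel \<rightarrow>\<^sub>M borel"
    unfolding borel_prod[symmetric] by simp_all
  from this[THEN marginal] have "distr (distr \<rho>a borel (\<lambda>x. (x, T x))) borel fst = \<rho>a"
    and "distr (distr \<rho>a borel (\<lambda>x. (x, T x))) borel snd = \<rho>b"
    using sets_a push by (simp_all add: comp_def distr_id2)
  then show ?thesis
    using prob_space.prob_space_distr[OF \<open>prob_space \<rho>a\<close> graph] unfolding couplings_def by simp
qed

lemma integrable_if_lagrangian_maximizer: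
  fixes \<rho>a :: "'a::euclidean_space measure" and \<rho>b :: "'b::euclidean_space measure"
    and c :: "'a \<times> 'b \<Rightarrow> real"
  assumes "prob_space \<rho>a" and sets_a: "sets \<rho>a = sets borel" and sets_b: "sets \<rho>b = sets borel"
    and c: "c \<in> borel_measurable borel" and c_lb: "\<And>z. a \<le> c z"
    and T: "T \<in> borel_measurable borel" and f: "integrable \<rho>b f"
    and max: "\<And>f'. integrable \<rho>b f' \<Longrightarrow> lagrangian_defined c \<rho>a T f' \<Longrightarrow>
      lagrangian c \<rho>a \<rho>b T f' \<le> lagrangian c \<rho>a \<rho>b T f"
    and fin: "lagrangian c \<rho>a \<rho>b T f \<noteq> \<infinity>"
  shows "integrable \<rho>a (\<lambda>x. c (x, T x) - f (T x))"
proof -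
  have meas_a: "X \<in> \<rho>a \<rightarrow>\<^sub>M N \<longleftrightarrow> X \<in> borel \<rightarrow>\<^sub>M N" for X and N :: "'c measure"
    using measurable_cong_sets[OF sets_a refl] by blast
  have "f \<in> borel_measurable borel"
    using borel_measurable_integrable[OF f] measurable_cong_sets[OF sets_b refl] by blast
  then have meas: "(\<lambda>x. c (x, T x) - f (T x)) \<in> borel_measurable \<rho>a"
    unfolding meas_a using c T by measurable
  have "lagrangian c \<rho>a \<rho>b T (\<lambda>_. 0) \<noteq> -\<infinity>"
    using ext_integral_bounded_below_neq_minf[OF \<open>prob_space \<rho>a\<close> _ c_lb] c T
    unfolding lagrangian_def meas_a by simp
  moreover have "lagrangian c \<rho>a \<rho>b T (\<lambda>_. 0) \<le> lagrangian c \<rho>a \<rho>b T f"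
    using max ext_integral_defined_bounded_below[OF \<open>prob_space \<rho>a\<close> _ c_lb] c T
    unfolding lagrangian_defined_def meas_a by simp
  ultimately have "\<bar>ext_integral \<rho>a (\<lambda>x. c (x, T x) - f (T x))\<bar> \<noteq> \<infinity>"
    using fin unfolding lagrangian_def by auto
  with meas show ?thesis by (rule integrable_if_ext_integral_finite)
qed

lemma OT_cost_le_lagrangian_of_maximizer:
  fixes \<rho>a :: "'a::euclidean_space measure" and \<rho>b :: "'b::euclidean_space measure"
    and c :: "'a \<times> 'b \<Rightarrow> real"
  assumes "prob_space \<rho>a" and sets_a: "sets \<rho>a = sets borel"
    and "prob_space \<rho>b" and sets_b: "sets \<rho>b = sets borel"
    and c: "continuous_on UNIV c" and c_lb: "\<And>z. a \<le> c z"
    and T: "T \<in> borel_measurable borel" and f: "integrable \<rho>b f"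
    and max: "\<And>f'. integrable \<rho>b f' \<Longrightarrow> lagrangian_defined c \<rho>a T f' \<Longrightarrow>
      lagrangian c \<rho>a \<rho>b T f' \<le> lagrangian c \<rho>a \<rho>b T f"
  shows "OT_cost c \<rho>a \<rho>b \<le> lagrangian c \<rho>a \<rho>b T f"
proof (cases "lagrangian c \<rho>a \<rho>b T f = \<infinity>")
  case False
  have c_meas: "c \<in> borel_measurable borel" using c by (rule borel_measurable_continuous_onI)
  define g where "g x = c (x, T x) - f (T x)" for x
  have g: "integrable \<rho>a g"
    unfolding g_def using integrable_if_lagrangian_maximizer[OF assms(1,2,4) c_meas c_lb T f max False] .
  have T_a: "T \<in> \<rho>a \<rightarrow>\<^sub>M \<rho>b" using T measurable_cong_sets[OF sets_a sets_b] by blast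
  with assms(1,3) have push_b: "distr \<rho>a \<rho>b T = \<rho>b"
    using f g max unfolding g_def by (rule distr_eq_if_lagrangian_maximizer)
  have "distr \<rho>a borel T = distr \<rho>a \<rho>b T" using sets_b by (intro distr_cong) simp_all
  with push_b have push: "distr \<rho>a borel T = \<rho>b" by simp
  have f_meas: "f \<in> borel_measurable \<rho>b" using f by auto
  have "(\<integral>x. f (T x) \<partial>\<rho>a) = integral\<^sup>L \<rho>b f" and "integrable \<rho>a (\<lambda>x. f (T x))"
    using f integral_distr[OF T_a f_meas] integrable_distr_eq[OF T_a f_meas] unfolding push_b by simp_all
  moreover have "(\<lambda>x. c (x, T x)) = (\<lambda>x. g x + f (T x))" unfolding g_def by simp
  ultimately have "ext_integral \<rho>a (\<lambda>x. c (x, T x)) = ext_integral \<rho>a g + ereal (integral\<^sup>L \<rho>b f)"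
    using g by (simp add: ext_integral_eq_integral)
  then have "ext_integral \<rho>a (\<lambda>x. c (x, T x)) = lagrangian c \<rho>a \<rho>b T f"
    unfolding lagrangian_def g_def .
  moreover have graph: "(\<lambda>x. (x, T x)) \<in> \<rho>a \<rightarrow>\<^sub>M borel"
    using T unfolding measurable_cong_sets[OF sets_a refl] borel_prod[symmetric] by simp
  ultimately have cost: "ext_integral (distr \<rho>a borel (\<lambda>x. (x, T x))) c = lagrangian c \<rho>a \<rho>b T f"
    by (simp add: ext_integral_distr[OF graph c_meas])
  have "distr \<rho>a borel (\<lambda>x. (x, T x)) \<in> couplings \<rho>a \<rho>b"
    using \<open>prob_space \<rho>a\<close> sets_a T push by (rule distr_graph_in_couplings)
  then have "OT_cost c \<rho>a \<rho>b \<le> ext_integral (distr \<rho>a borel (\<lambda>x. (x, T x))) c"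
    unfolding OT_cost_def by (rule INF_lower)
  then show ?thesis unfolding cost .
qed simp

theorem theorem3:
  fixes \<rho>a :: "'a::euclidean_space measure" and \<rho>b :: "'b::euclidean_space measure"
    and c :: "'a \<times> 'b \<Rightarrow> real"
    and Tbar :: "'a \<Rightarrow> 'b" and fbar :: "'b \<Rightarrow> real"
  assumes "prob_space \<rho>a" and "sets \<rho>a = sets borel"
    and "prob_space \<rho>b" and "sets \<rho>b = sets borel"
    and "continuous_on UNIV c" and "\<exists>M. \<forall>z. M \<le> c z"
    and "Tbar \<in> borel_measurable borel" and "integrable \<rho>b fbar"
    and "lagrangian_defined c \<rho>a Tbar fbar"
    and "\<forall>f. integrable \<rho>b f \<and> lagrangian_defined c \<rho>a Tbar f \<longrightarrow>
           lagrangian c \<rho>a \<rho>b Tbar f \<le> lagrangian c \<rho>a \<rho>b Tbar fbar"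
    and "\<forall>T. T \<in> borel_measurable borel \<and> lagrangian_defined c \<rho>a T fbar \<longrightarrow>
           lagrangian c \<rho>a \<rho>b Tbar fbar \<le> lagrangian c \<rho>a \<rho>b T fbar"
  shows "lagrangian c \<rho>a \<rho>b Tbar fbar = OT_cost c \<rho>a \<rho>b"
proof (rule antisym)
  obtain a where c_lb: "\<And>z. a \<le> c z" using assms(6) by blast
  have "lagrangian c \<rho>a \<rho>b Tbar fbar \<le>
      (INF T \<in> {T \<in> borel_measurable borel. lagrangian_defined c \<rho>a T fbar}. lagrangian c \<rho>a \<rho>b T fbar)"
    using assms(11) by (intro INF_greatest) auto
  also have "\<dots> \<le> OT_cost c \<rho>a \<rho>b"
    unfolding OT_cost_def using assms(5,8) c_lb by (intro INF_greatest INF_lagrangian_le_coupling_cost)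
  finally show "lagrangian c \<rho>a \<rho>b Tbar fbar \<le> OT_cost c \<rho>a \<rho>b" .
  show "OT_cost c \<rho>a \<rho>b \<le> lagrangian c \<rho>a \<rho>b Tbar fbar"
    using assms(10) by (intro OT_cost_le_lagrangian_of_maximizer[OF assms(1-5) c_lb assms(7,8)]) blast
qed

end
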